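(* There is an absolute constant $\alpha>0$ such that the following holds. Let $n\ge 2$, $c\ge 1$, $0<\Delta\le c^2$, and let $W=(\vec v_i)_{i\in I}$ be a family of $|I|\le n$ vectors in $\mathbb{R}^D$ such that every vertex has expected degree at most $c$ in $G\sim\mathcal{G}_W$. Suppose there is $L>0$ with $L\ge \sqrt{\Delta}/(4c)$ such that $\|\vec v_i\|_2<2L$ for all $i\in I$ and at least $(\Delta/60c^2)(n/\lg n)$ indices $i\in I$ satisfy $\|\vec v_i\|_2\ge L$. Then the matrix whose columns are the $\vec v_i$ has rank at least $\alpha\,(\Delta^4/c^9)\, n/\lg^2 n$.
   Context: For a finite family of vectors $W=(\vec w_i)_{i\in I}$ in $\mathbb{R}^D$, $\mathcal{G}_W$ is the distribution on simple undirected graphs with vertex set $I$ in which, independently for each unordered pair $\{i,j\}$ with $i\neq j$, the edge $(i,j)$ is present with probability $\max(0,\min(\vec w_i\cdot\vec w_j,1))$. The expected degree of $i$ is $\sum_{j\ne i}\max(0,\min(\vec w_i\cdot\vec w_j,1))$. $\lg$ is the base-2 logarithm. *)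

theory Defs
  imports "Jordan_Normal_Form.DL_Rank"
begin

definition edge_prob :: "real vec \<Rightarrow> real vec \<Rightarrow> real" where
  "edge_prob v w = max 0 (min (v \<bullet> w) 1)"

text \<open>The family W is a list ws, indexed by I = {0..<length ws}.
  Expected degree of vertex i in G ~ G_W.\<close>
definition expected_degree :: "real vec list \<Rightarrow> nat \<Rightarrow> real" where
  "expected_degree ws i = (\<Sum>j\<in>{0..<length ws} - {i}. edge_prob (ws ! i) (ws ! j))"

definition vnorm :: "real vec \<Rightarrow> real" where
  "vnorm v = sqrt (v \<bullet> v)"

end

theory Submission
  imports Defs "Jordan_Normal_Form.Gram_Schmidt"
begin

text \<open>
  Let \<open>G\<close> be the Gram matrix of the heavy vectors, indexed by \<open>H\<close> with \<open>|H| = m\<close>, and let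
  \<open>r\<close> be the rank of the whole family. Expanding in an orthogonal basis of the span writes
  \<open>G\<^sub>i\<^sub>j = \<Sum>\<^sub>k\<^sub><\<^sub>r a\<^sub>i\<^sub>k a\<^sub>j\<^sub>k\<close>, and Cauchy-Schwarz over the \<open>r\<close> coordinates gives
  \<open>(tr G)\<^sup>2 \<le> r \<parallel>G\<parallel>\<^sub>F\<^sup>2\<close>. The trace is at least \<open>L\<^sup>2 m\<close>. All entries are bounded by
  \<open>M = 4L\<^sup>2\<close>, so a positive entry is at most \<open>max 1 M\<close> times its truncated edge probability and the
  positive off-diagonal entries of a row sum to at most \<open>max 1 M \<cdot> c\<close>; as the sum of all entries of
  \<open>G\<close> is nonnegative, the negative entries are paid for by the positive ones and the trace. Hence
  \<open>\<parallel>G\<parallel>\<^sub>F\<^sup>2 \<le> 2Mm(M + max 1 M \<cdot> c)\<close>, which yields \<open>r \<ge> \<Delta> m / (256 c\<^sup>3)\<close>; the assumed lower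
  bound on \<open>m\<close> finishes the proof.
\<close>

lemma (in cof_vec_space) orthogonal_basis_of_span_exists:
  fixes ws :: "'a vec list"
  assumes W: "set ws \<subseteq> carrier_vec n"
  shows "\<exists>us. set us \<subseteq> carrier_vec n \<and> distinct us \<and> corthogonal us \<and>
     length us = rank (mat_of_cols n ws) \<and> set ws \<subseteq> span (set us)"
proof -
  obtain S where S: "maximal S (\<lambda>T. T \<subseteq> set ws \<and> lin_indpt T)"
    using maximal_exists[of "\<lambda>T. T \<subseteq> set ws \<and> lin_indpt T" "card (set ws)" "{}"]
    by (meson List.finite_set card_mono empty_iff empty_subsetI finite_lin_indpt2 rev_finite_subset)
  have Sws: "S \<subseteq> set ws" and Sli: "lin_indpt S" using S by (auto simp: maximal_def)
  have SC: "S \<subseteq> carrier_vec n" using Sws W by auto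
  have rank: "rank (mat_of_cols n ws) = card S"
    using rank_card_indpt[OF mat_of_cols_carrier(1)] S cols_mat_of_cols[OF W] by simp
  have spanS: "set ws \<subseteq> span S"
  proof
    fix s assume s: "s \<in> set ws"
    show "s \<in> span S"
    proof (rule ccontr)
      assume ns: "s \<notin> span S"
      have sC: "s \<in> carrier_vec n" using s W by auto
      have "s \<notin> S" using ns SC span_mem by auto
      have "lin_indpt (insert s S)"
        using lindep_span ns Sli SC sC lin_dep_iff_in_span by (metis \<open>s \<notin> S\<close> insert_is_Un sup_commute)
      then show False using S s Sws \<open>s \<notin> S\<close> unfolding maximal_def by blast
    qed
  qed
  obtain xs where xs: "set xs = S" "distinct xs"
    using finite_distinct_list[OF finite_subset[OF Sws]] by blast
  define us where "us = gram_schmidt n xs"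
  have "span (set xs) = span (set us)" "corthogonal us" "set us \<subseteq> carrier_vec n"
     "length us = length xs" "distinct us"
    using gram_schmidt_result[of xs us] xs SC Sli us_def by auto
  with xs spanS rank distinct_card[OF xs(2)] show ?thesis by auto
qed

lemma conjugate_real_vec [simp]: "conjugate (v :: real vec) = v"
  by (rule eq_vecI) (auto simp: conjugate_vec_def)

lemma scalar_prod_orthogonal_expansion:
  fixes us :: "real vec list" and v x :: "real vec"
  assumes U: "set us \<subseteq> carrier_vec n" and orth: "corthogonal us"
    and v: "v \<in> LinearCombinations.module.span class_ring (module_vec TYPE(real) n) (set us)"
    and x: "x \<in> carrier_vec n"
  shows "v \<bullet> x = (\<Sum>u\<in>set us. (v \<bullet> u) * (u \<bullet> x) / (u \<bullet> u))"
proof -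
  interpret cof_vec_space n "TYPE(real)" .
  obtain a where a: "lincomb a (set us) = v" using finite_in_span[OF _ U v] by auto
  have orth_set: "u \<bullet> u' = 0" if "u \<in> set us" "u' \<in> set us" "u \<noteq> u'" for u u'
    using that corthogonalD[OF orth] by (auto simp: in_set_conv_nth)
  have norm_nz: "u \<bullet> u \<noteq> 0" if "u \<in> set us" for u
    using that corthogonalD[OF orth] by (auto simp: in_set_conv_nth)
  have lc: "v \<bullet> y = (\<Sum>u\<in>set us. a u * (u \<bullet> y))" if y: "y \<in> carrier_vec n" for y
  proof -
    have "v \<bullet> y = (\<Sum>u\<in>set us. (a u \<cdot>\<^sub>v u) \<bullet> y)"
      unfolding a[symmetric] lincomb_def by (rule finsum_scalar_prod_sum) (use U y in auto)
    also have "\<dots> = (\<Sum>u\<in>set us. a u * (u \<bullet> y))"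
      by (rule sum.cong) (use U y in auto)
    finally show ?thesis .
  qed
  have coeff: "a u = (v \<bullet> u) / (u \<bullet> u)" if u: "u \<in> set us" for u
  proof -
    have "v \<bullet> u = a u * (u \<bullet> u) + (\<Sum>w\<in>set us - {u}. a w * (w \<bullet> u))"
      using lc[of u] u U by (auto simp: sum.remove[OF _ u])
    also have "(\<Sum>w\<in>set us - {u}. a w * (w \<bullet> u)) = 0"
      by (rule sum.neutral) (use orth_set[OF _ u] in auto)
    finally show ?thesis using norm_nz[OF u] by simp
  qed
  show ?thesis
    unfolding lc[OF x] by (rule sum.cong) (simp_all add: coeff)
qed

lemma scalar_prod_factorization_rank:
  fixes ws :: "real vec list"
  assumes W: "set ws \<subseteq> carrier_vec D"
  shows "\<exists>a. \<forall>i<length ws. \<forall>j<length ws.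
     ws ! i \<bullet> ws ! j = (\<Sum>k<vec_space.rank D (mat_of_cols D ws). a i k * a j k)"
proof -
  interpret cof_vec_space D "TYPE(real)" .
  obtain us where us: "set us \<subseteq> carrier_vec D" "distinct us" "corthogonal us"
     "length us = rank (mat_of_cols D ws)" "set ws \<subseteq> span (set us)"
    using orthogonal_basis_of_span_exists[OF W] by blast
  define a where "a i k = (ws ! i \<bullet> us ! k) / sqrt (us ! k \<bullet> us ! k)" for i k
  have "ws ! i \<bullet> ws ! j = (\<Sum>k<rank (mat_of_cols D ws). a i k * a j k)"
    if i: "i < length ws" and j: "j < length ws" for i j
  proof -
    have "ws ! i \<bullet> ws ! j = (\<Sum>u\<in>set us. (ws ! i \<bullet> u) * (u \<bullet> ws ! j) / (u \<bullet> u))"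
      by (rule scalar_prod_orthogonal_expansion[OF us(1,3)]) (use us(5) W i j in auto)
    also have "\<dots> = (\<Sum>k<length us. (ws ! i \<bullet> us ! k) * (us ! k \<bullet> ws ! j) / (us ! k \<bullet> us ! k))"
      by (simp add: sum.distinct_set_conv_list[OF us(2)] sum_list_sum_nth atLeast0LessThan)
    also have "\<dots> = (\<Sum>k<length us. a i k * a j k)"
    proof (rule sum.cong[OF refl])
      fix k assume "k \<in> {..<length us}"
      then have u: "us ! k \<in> carrier_vec D" using us(1) by auto
      have "ws ! j \<in> carrier_vec D" using W j by auto
      then have "us ! k \<bullet> ws ! j = ws ! j \<bullet> us ! k" using comm_scalar_prod[OF u] by blast
      moreover have "0 \<le> us ! k \<bullet> us ! k" using conjugate_square_ge_0_vec[of "us ! k"] by simp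
      ultimately show "(ws ! i \<bullet> us ! k) * (us ! k \<bullet> ws ! j) / (us ! k \<bullet> us ! k) = a i k * a j k"
        by (simp add: a_def)
    qed
    finally show ?thesis using us(4) by simp
  qed
  then show ?thesis by blast
qed

lemma square_sum_le_card_mul_sum_squares:
  fixes f :: "'a \<Rightarrow> real"
  shows "(\<Sum>x\<in>A. f x)\<^sup>2 \<le> card A * (\<Sum>x\<in>A. (f x)\<^sup>2)"
proof -
  have "0 \<le> (\<Sum>x\<in>A. \<Sum>y\<in>A. (f x - f y)\<^sup>2)" by (intro sum_nonneg) auto
  also have "\<dots> = 2 * card A * (\<Sum>x\<in>A. (f x)\<^sup>2) - 2 * (\<Sum>x\<in>A. f x)\<^sup>2"
    by (simp add: power2_eq_square algebra_simps sum_subtractf sum.distrib sum_distrib_left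
        sum_product)
  finally show ?thesis by simp
qed

lemma gram_sum_nonneg:
  fixes a :: "'i \<Rightarrow> 'u \<Rightarrow> real"
  shows "0 \<le> (\<Sum>i\<in>H. \<Sum>j\<in>H. \<Sum>u\<in>U. a i u * a j u)"
proof -
  have "(\<Sum>i\<in>H. \<Sum>j\<in>H. \<Sum>u\<in>U. a i u * a j u) = (\<Sum>u\<in>U. (\<Sum>i\<in>H. a i u)\<^sup>2)"
    by (simp add: power2_eq_square sum_product sum.swap[of _ H U] sum.swap[of _ H U]
        cong: sum.cong)
  then show ?thesis by (simp add: sum_nonneg)
qed

lemma gram_abs_le:
  fixes a :: "'i \<Rightarrow> 'u \<Rightarrow> real"
  shows "2 * \<bar>\<Sum>u\<in>U. a i u * a j u\<bar> \<le> (\<Sum>u\<in>U. a i u * a i u) + (\<Sum>u\<in>U. a j u * a j u)"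
proof -
  have "(\<Sum>u\<in>U. a i u * a i u) + (\<Sum>u\<in>U. a j u * a j u) - 2 * (\<Sum>u\<in>U. a i u * a j u)
      = (\<Sum>u\<in>U. (a i u - a j u)\<^sup>2)"
   "(\<Sum>u\<in>U. a i u * a i u) + (\<Sum>u\<in>U. a j u * a j u) + 2 * (\<Sum>u\<in>U. a i u * a j u)
      = (\<Sum>u\<in>U. (a i u + a j u)\<^sup>2)"
    by (simp_all add: power2_eq_square algebra_simps sum.distrib sum_subtractf sum_distrib_left)
  moreover have "0 \<le> (\<Sum>u\<in>U. (a i u - a j u)\<^sup>2)" "0 \<le> (\<Sum>u\<in>U. (a i u + a j u)\<^sup>2)"
    by (simp_all add: sum_nonneg)
  ultimately show ?thesis by linarith
qed

lemma gram_trace_sq_le: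
  fixes a :: "'i \<Rightarrow> 'u \<Rightarrow> real"
  assumes "finite U"
  shows "(\<Sum>i\<in>H. \<Sum>u\<in>U. a i u * a i u)\<^sup>2
     \<le> card U * (\<Sum>i\<in>H. \<Sum>j\<in>H. (\<Sum>u\<in>U. a i u * a j u)\<^sup>2)"
proof -
  define g where "g u v = (\<Sum>i\<in>H. a i u * a i v)" for u v
  have trace: "(\<Sum>i\<in>H. \<Sum>u\<in>U. a i u * a i u) = (\<Sum>u\<in>U. g u u)"
    unfolding g_def by (rule sum.swap)
  have frobenius: "(\<Sum>i\<in>H. \<Sum>j\<in>H. (\<Sum>u\<in>U. a i u * a j u)\<^sup>2) = (\<Sum>u\<in>U. \<Sum>v\<in>U. (g u v)\<^sup>2)"
    unfolding g_def
    by (simp add: power2_eq_square sum_product sum.swap[of _ H U] sum.swap[of _ H U]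
        algebra_simps cong: sum.cong)
  have "(\<Sum>u\<in>U. (g u u)\<^sup>2) \<le> (\<Sum>u\<in>U. \<Sum>v\<in>U. (g u v)\<^sup>2)"
    using assms by (intro sum_mono member_le_sum) auto
  then show ?thesis
    unfolding trace frobenius
    using square_sum_le_card_mul_sum_squares[of "\<lambda>u. g u u" U]
    by (meson mult_left_mono of_nat_0_le_iff order_trans)
qed

lemma pos_part_le_max_one_mul_truncation:
  fixes x M :: real
  assumes "x \<le> M"
  shows "max 0 x \<le> max 1 M * max 0 (min x 1)"
proof (cases "x \<le> 1")
  case True
  then show ?thesis by (auto simp: max_def min_def mult_le_cancel_right1)
next
  case False
  then show ?thesis using assms by (simp add: max_def)
qed

lemma sum_abs_offdiag_le:
  fixes x :: "'i \<Rightarrow> 'i \<Rightarrow> real" and M B :: real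
  assumes H: "finite H"
    and total: "0 \<le> (\<Sum>i\<in>H. \<Sum>j\<in>H. x i j)"
    and diag: "\<And>i. i \<in> H \<Longrightarrow> x i i \<le> M"
    and pos: "\<And>i. i \<in> H \<Longrightarrow> (\<Sum>j\<in>H - {i}. max 0 (x i j)) \<le> B"
  shows "(\<Sum>i\<in>H. \<Sum>j\<in>H - {i}. \<bar>x i j\<bar>) \<le> card H * (M + 2 * B)"
proof -
  have row: "(\<Sum>j\<in>H. x i j) = x i i + (\<Sum>j\<in>H - {i}. x i j)" if "i \<in> H" for i
    using H that by (rule sum.remove)
  have "\<bar>t\<bar> = 2 * max 0 t - t" for t :: real
    by (simp add: max_def abs_if)
  then have "(\<Sum>i\<in>H. \<Sum>j\<in>H - {i}. \<bar>x i j\<bar>)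
      = 2 * (\<Sum>i\<in>H. \<Sum>j\<in>H - {i}. max 0 (x i j)) - (\<Sum>i\<in>H. \<Sum>j\<in>H - {i}. x i j)"
    by (simp add: sum_distrib_left sum_subtractf)
  also have "(\<Sum>i\<in>H. \<Sum>j\<in>H - {i}. x i j) = (\<Sum>i\<in>H. \<Sum>j\<in>H. x i j) - (\<Sum>i\<in>H. x i i)"
    by (simp add: row sum_subtractf[symmetric] cong: sum.cong)
  also have "(\<Sum>i\<in>H. x i i) \<le> card H * M"
    using sum_mono[of H "\<lambda>i. x i i" "\<lambda>_. M"] diag by simp
  also have "(\<Sum>i\<in>H. \<Sum>j\<in>H - {i}. max 0 (x i j)) \<le> card H * B"
    using sum_mono[of H _ "\<lambda>_. B"] pos by simp
  finally show ?thesis using total by (simp add: algebra_simps)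
qed

lemma frobenius_le_of_degree_bound:
  fixes x :: "'i \<Rightarrow> 'i \<Rightarrow> real" and M c :: real
  assumes H: "finite H"
    and total: "0 \<le> (\<Sum>i\<in>H. \<Sum>j\<in>H. x i j)"
    and diag: "\<And>i. i \<in> H \<Longrightarrow> x i i \<le> M"
    and offdiag: "\<And>i j. i \<in> H \<Longrightarrow> j \<in> H \<Longrightarrow> 2 * \<bar>x i j\<bar> \<le> x i i + x j j"
    and degree: "\<And>i. i \<in> H \<Longrightarrow> (\<Sum>j\<in>H - {i}. max 0 (min (x i j) 1)) \<le> c"
  shows "(\<Sum>i\<in>H. \<Sum>j\<in>H. (x i j)\<^sup>2) \<le> 2 * M * card H * (M + max 1 M * c)"
proof (cases "H = {}")
  case False
  have diag_nonneg: "0 \<le> x i i" if "i \<in> H" for i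
    using offdiag[OF that that] by simp
  have abs_le: "\<bar>x i j\<bar> \<le> M" if "i \<in> H" "j \<in> H" for i j
    using offdiag[OF that] diag[OF that(1)] diag[OF that(2)] by simp
  have "0 \<le> M" using False diag diag_nonneg by force
  have pos: "(\<Sum>j\<in>H - {i}. max 0 (x i j)) \<le> max 1 M * c" if i: "i \<in> H" for i
  proof -
    have "(\<Sum>j\<in>H - {i}. max 0 (x i j)) \<le> (\<Sum>j\<in>H - {i}. max 1 M * max 0 (min (x i j) 1))"
      using abs_le[OF i] by (intro sum_mono pos_part_le_max_one_mul_truncation) (auto simp: abs_le_iff)
    also have "\<dots> \<le> max 1 M * c"
      using degree[OF i] by (simp add: sum_distrib_left[symmetric] mult_left_mono)
    finally show ?thesis .
  qed
  have row: "(\<Sum>j\<in>H. (x i j)\<^sup>2) \<le> M * M + M * (\<Sum>j\<in>H - {i}. \<bar>x i j\<bar>)" if i: "i \<in> H" for i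
  proof -
    have "(\<Sum>j\<in>H. (x i j)\<^sup>2) = (x i i)\<^sup>2 + (\<Sum>j\<in>H - {i}. \<bar>x i j\<bar> * \<bar>x i j\<bar>)"
      using H i by (simp add: sum.remove power2_eq_square)
    also have "(x i i)\<^sup>2 \<le> M * M"
      using diag[OF i] diag_nonneg[OF i] by (simp add: power2_eq_square mult_mono)
    also have "(\<Sum>j\<in>H - {i}. \<bar>x i j\<bar> * \<bar>x i j\<bar>) \<le> (\<Sum>j\<in>H - {i}. M * \<bar>x i j\<bar>)"
      using abs_le[OF i] by (intro sum_mono mult_right_mono) auto
    finally show ?thesis by (simp add: sum_distrib_left)
  qed
  have "(\<Sum>i\<in>H. \<Sum>j\<in>H. (x i j)\<^sup>2) \<le> card H * (M * M) + M * (\<Sum>i\<in>H. \<Sum>j\<in>H - {i}. \<bar>x i j\<bar>)"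
    using sum_mono[OF row] by (simp add: sum.distrib sum_distrib_left)
  also have "\<dots> \<le> card H * (M * M) + M * (card H * (M + 2 * (max 1 M * c)))"
    using sum_abs_offdiag_le[OF H total diag pos] \<open>0 \<le> M\<close> by (intro add_left_mono mult_left_mono)
  finally show ?thesis by (simp add: algebra_simps)
qed simp

lemma rank_bound_of_heavy_set:
  fixes ws :: "real vec list" and H :: "nat set" and L c :: real
  assumes W: "set ws \<subseteq> carrier_vec D" and H: "H \<subseteq> {..<length ws}" and "0 \<le> L" and "0 \<le> c"
    and norm: "\<And>i. i \<in> H \<Longrightarrow> L \<le> vnorm (ws ! i) \<and> vnorm (ws ! i) < 2 * L"
    and degree: "\<And>i. i \<in> H \<Longrightarrow> (\<Sum>j\<in>H - {i}. edge_prob (ws ! i) (ws ! j)) \<le> c"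
  shows "L\<^sup>2 * card H
    \<le> 8 * real (vec_space.rank D (mat_of_cols D ws)) * (4 * L\<^sup>2 + max 1 (4 * L\<^sup>2) * c)"
proof -
  define r where "r = vec_space.rank D (mat_of_cols D ws)"
  obtain a where a: "\<forall>i<length ws. \<forall>j<length ws. ws ! i \<bullet> ws ! j = (\<Sum>k<r. a i k * a j k)"
    using scalar_prod_factorization_rank[OF W] unfolding r_def by blast
  define x where "x i j = (\<Sum>k<r. a i k * a j k)" for i j
  have finH: "finite H" using H finite_subset by blast
  have x: "x i j = ws ! i \<bullet> ws ! j" if "i \<in> H" "j \<in> H" for i j
    using a that H unfolding x_def by (simp add: subset_iff)
  have diag: "L\<^sup>2 \<le> x i i \<and> x i i \<le> 4 * L\<^sup>2" if i: "i \<in> H" for i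
  proof -
    have "0 \<le> x i i" unfolding x_def by (simp add: sum_nonneg)
    moreover have "L \<le> sqrt (x i i)" "sqrt (x i i) < 2 * L"
      using norm[OF i] unfolding vnorm_def x[OF i i] by auto
    ultimately show ?thesis
      using power_mono[of L "sqrt (x i i)" 2] power_strict_mono[of "sqrt (x i i)" "2 * L" 2] \<open>0 \<le> L\<close>
      by (simp add: power_mult_distrib)
  qed
  have degree_x: "(\<Sum>j\<in>H - {i}. max 0 (min (x i j) 1)) \<le> c" if i: "i \<in> H" for i
  proof -
    have "(\<Sum>j\<in>H - {i}. max 0 (min (x i j) 1)) = (\<Sum>j\<in>H - {i}. edge_prob (ws ! i) (ws ! j))"
      using i by (intro sum.cong refl) (auto simp: x edge_prob_def)
    then show ?thesis using degree[OF i] by simp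
  qed
  define Q where "Q = 4 * L\<^sup>2 + max 1 (4 * L\<^sup>2) * c"
  have frobenius: "(\<Sum>i\<in>H. \<Sum>j\<in>H. (x i j)\<^sup>2) \<le> 2 * (4 * L\<^sup>2) * card H * Q"
    unfolding Q_def
  proof (rule frobenius_le_of_degree_bound[OF finH])
    show "0 \<le> (\<Sum>i\<in>H. \<Sum>j\<in>H. x i j)" unfolding x_def by (rule gram_sum_nonneg)
    show "2 * \<bar>x i j\<bar> \<le> x i i + x j j" for i j unfolding x_def by (rule gram_abs_le)
  qed (use diag degree_x in auto)
  have trace: "L\<^sup>2 * card H \<le> (\<Sum>i\<in>H. x i i)"
    using sum_mono[of H "\<lambda>_. L\<^sup>2" "\<lambda>i. x i i"] diag by (simp add: mult.commute)
  have "(L\<^sup>2 * card H)\<^sup>2 \<le> (\<Sum>i\<in>H. x i i)\<^sup>2"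
    using trace by (intro power_mono) auto
  also have "\<dots> \<le> r * (\<Sum>i\<in>H. \<Sum>j\<in>H. (x i j)\<^sup>2)"
    using gram_trace_sq_le[where U = "{..<r}" and H = H and a = a] unfolding x_def by simp
  also have "\<dots> \<le> r * (2 * (4 * L\<^sup>2) * card H * Q)"
    using frobenius by (intro mult_left_mono) auto
  finally have "(L\<^sup>2 * card H) * (L\<^sup>2 * card H) \<le> (L\<^sup>2 * card H) * (8 * r * Q)"
    by (simp add: power2_eq_square mult_ac)
  moreover have "0 \<le> Q" unfolding Q_def using \<open>0 \<le> c\<close> by simp
  ultimately show ?thesis
    unfolding r_def[symmetric] Q_def[symmetric]
    by (cases "L\<^sup>2 * card H = 0") (auto simp: mult_le_cancel_left_pos)
qed

lemma rank_ge_heavy_card_arith: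
  fixes c \<Delta> L m r :: real
  assumes c: "1 \<le> c" and \<Delta>: "0 < \<Delta>" "\<Delta> \<le> c\<^sup>2" and L: "sqrt \<Delta> / (4 * c) \<le> L"
    and r: "L\<^sup>2 * m \<le> 8 * r * (4 * L\<^sup>2 + max 1 (4 * L\<^sup>2) * c)" and "0 \<le> r"
  shows "\<Delta> * m / (256 * c ^ 3) \<le> r"
proof -
  have "sqrt \<Delta> \<le> 4 * c * L" using L c by (simp add: divide_le_eq mult.commute)
  then have "(sqrt \<Delta>)\<^sup>2 \<le> (4 * c * L)\<^sup>2" using \<Delta> by (intro power_mono) auto
  then have \<Delta>L: "\<Delta> \<le> 16 * c\<^sup>2 * L\<^sup>2" using \<Delta> by (simp add: power_mult_distrib)
  have "0 < sqrt \<Delta> / (4 * c)" using \<Delta> c by simp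
  with L have "0 < L" by linarith
  have ratio: "\<Delta> * (4 * L\<^sup>2 + max 1 (4 * L\<^sup>2) * c) \<le> 32 * (c ^ 3 * L\<^sup>2)"
  proof (cases "4 * L\<^sup>2 \<le> 1")
    case True
    then have "\<Delta> * (4 * L\<^sup>2 + max 1 (4 * L\<^sup>2) * c) \<le> \<Delta> * (2 * c)"
      using c \<Delta> by (intro mult_left_mono) auto
    also have "\<dots> \<le> 16 * c\<^sup>2 * L\<^sup>2 * (2 * c)" using \<Delta>L c by (intro mult_right_mono) auto
    finally show ?thesis by (simp add: power2_eq_square power3_eq_cube mult_ac)
  next
    case False
    then have "4 * L\<^sup>2 + max 1 (4 * L\<^sup>2) * c \<le> 8 * L\<^sup>2 * c"
      using c mult_left_mono[of 1 c "L\<^sup>2"] by (simp add: max_def mult.commute)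
    then have "\<Delta> * (4 * L\<^sup>2 + max 1 (4 * L\<^sup>2) * c) \<le> c\<^sup>2 * (8 * L\<^sup>2 * c)"
      using c \<Delta> by (intro mult_mono) auto
    also have "\<dots> = 8 * (c ^ 3 * L\<^sup>2)" by (simp add: power2_eq_square power3_eq_cube mult_ac)
    finally have "\<Delta> * (4 * L\<^sup>2 + max 1 (4 * L\<^sup>2) * c) \<le> 8 * (c ^ 3 * L\<^sup>2)" .
    moreover have "0 \<le> c ^ 3 * L\<^sup>2" using c by simp
    ultimately show ?thesis by linarith
  qed
  have "\<Delta> * (L\<^sup>2 * m) \<le> \<Delta> * (8 * r * (4 * L\<^sup>2 + max 1 (4 * L\<^sup>2) * c))"
    using r \<Delta> by (intro mult_left_mono) auto
  also have "\<dots> = 8 * r * (\<Delta> * (4 * L\<^sup>2 + max 1 (4 * L\<^sup>2) * c))" by (simp add: mult_ac)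
  also have "\<dots> \<le> 8 * r * (32 * (c ^ 3 * L\<^sup>2))"
    using ratio \<open>0 \<le> r\<close> by (intro mult_left_mono) auto
  also have "\<dots> = L\<^sup>2 * (256 * c ^ 3 * r)" by (simp add: mult_ac)
  finally have "\<Delta> * m \<le> 256 * c ^ 3 * r"
    using \<open>0 < L\<close> by (simp add: mult.left_commute)
  then show ?thesis using c by (simp add: divide_le_eq mult.commute)
qed

lemma rank_ge_main_bound_arith:
  fixes c \<Delta> m r N lg :: real
  assumes r: "\<Delta> * m / (256 * c ^ 3) \<le> r" and m: "\<Delta> / (60 * c\<^sup>2) * (N / lg) \<le> m"
    and c: "1 \<le> c" and \<Delta>: "0 < \<Delta>" "\<Delta> \<le> c\<^sup>2" and lg: "1 \<le> lg" and "0 \<le> N"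
  shows "1 / 15360 * (\<Delta> ^ 4 / c ^ 9) * (N / lg\<^sup>2) \<le> r"
proof -
  have "\<Delta>\<^sup>2 \<le> (c\<^sup>2)\<^sup>2" using \<Delta> by (intro power_mono) auto
  also have "\<dots> = c ^ 4 * 1" by (simp flip: power_mult)
  also have "\<dots> \<le> c ^ 4 * lg" using lg by (intro mult_left_mono) auto
  finally have "\<Delta>\<^sup>2 * \<Delta>\<^sup>2 * N \<le> \<Delta>\<^sup>2 * (c ^ 4 * lg) * N"
    using \<open>0 \<le> N\<close> by (intro mult_right_mono mult_left_mono) auto
  then have "1 / 15360 * (\<Delta> ^ 4 / c ^ 9) * (N / lg\<^sup>2)
      \<le> \<Delta> * (\<Delta> / (60 * c\<^sup>2) * (N / lg)) / (256 * c ^ 3)"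
    using c lg by (simp add: field_simps power2_eq_square eval_nat_numeral)
  also have "\<dots> \<le> \<Delta> * m / (256 * c ^ 3)"
    using m \<Delta> c by (intro divide_right_mono mult_left_mono) auto
  finally show ?thesis using r by linarith
qed

theorem mainTheorem9:
  shows "\<exists>\<alpha>::real. \<alpha> > 0 \<and>
    (\<forall>(n::nat) (c::real) (\<Delta>::real) (D::nat) (ws::real vec list) (L::real).
      n \<ge> 2 \<longrightarrow> c \<ge> 1 \<longrightarrow> 0 < \<Delta> \<longrightarrow> \<Delta> \<le> c\<^sup>2 \<longrightarrow>
      length ws \<le> n \<longrightarrow>
      (\<forall>i<length ws. ws ! i \<in> carrier_vec D) \<longrightarrow>
      (\<forall>i<length ws. expected_degree ws i \<le> c) \<longrightarrow>
      L > 0 \<longrightarrow> L \<ge> sqrt \<Delta> / (4 * c) \<longrightarrow>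
      (\<forall>i<length ws. vnorm (ws ! i) < 2 * L) \<longrightarrow>
      real (card {i. i < length ws \<and> vnorm (ws ! i) \<ge> L})
        \<ge> (\<Delta> / (60 * c\<^sup>2)) * (real n / log 2 (real n)) \<longrightarrow>
      real (vec_space.rank D (mat_of_cols D ws))
        \<ge> \<alpha> * (\<Delta> ^ 4 / c ^ 9) * (real n / (log 2 (real n))\<^sup>2))"
proof (rule exI[of _ "1 / 15360"], intro conjI allI impI)
  fix n :: nat and c \<Delta> :: real and D :: nat and ws :: "real vec list" and L :: real
  assume n: "n \<ge> 2" and c: "c \<ge> 1" and \<Delta>: "0 < \<Delta>" "\<Delta> \<le> c\<^sup>2"
    and "length ws \<le> n" \<comment> \<open>not needed: \<open>n\<close> enters only through the heavy count\<close>
    and W: "\<forall>i<length ws. ws ! i \<in> carrier_vec D"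
    and degree: "\<forall>i<length ws. expected_degree ws i \<le> c"
    and "L > 0" and L: "L \<ge> sqrt \<Delta> / (4 * c)"
    and norm: "\<forall>i<length ws. vnorm (ws ! i) < 2 * L"
    and heavy: "real (card {i. i < length ws \<and> vnorm (ws ! i) \<ge> L})
        \<ge> (\<Delta> / (60 * c\<^sup>2)) * (real n / log 2 (real n))"
  define H where "H = {i. i < length ws \<and> vnorm (ws ! i) \<ge> L}"
  have degree_H: "(\<Sum>j\<in>H - {i}. edge_prob (ws ! i) (ws ! j)) \<le> c" if i: "i \<in> H" for i
  proof -
    have "(\<Sum>j\<in>H - {i}. edge_prob (ws ! i) (ws ! j)) \<le> expected_degree ws i"
      unfolding expected_degree_def by (rule sum_mono2) (auto simp: H_def edge_prob_def)
    then show ?thesis using degree i by (auto simp: H_def)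
  qed
  have "L\<^sup>2 * card H \<le> 8 * real (vec_space.rank D (mat_of_cols D ws)) * (4 * L\<^sup>2 + max 1 (4 * L\<^sup>2) * c)"
    by (rule rank_bound_of_heavy_set) (use W norm degree_H \<open>L > 0\<close> c in \<open>auto simp: H_def in_set_conv_nth\<close>)
  then have "\<Delta> * card H / (256 * c ^ 3) \<le> vec_space.rank D (mat_of_cols D ws)"
    by (rule rank_ge_heavy_card_arith[OF c \<Delta> L]) simp
  then show "1 / 15360 * (\<Delta> ^ 4 / c ^ 9) * (real n / (log 2 (real n))\<^sup>2)
      \<le> vec_space.rank D (mat_of_cols D ws)"
    by (rule rank_ge_main_bound_arith[OF _ heavy[folded H_def] c \<Delta>]) (use n in auto)
qed simp

end
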